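(* Let $p,r\in\mathbb{C}$ with $p$ not a root of unity. For all integers $m,n\ge 0$, $$H_{m,n}(x,y;p,r)=\sum_{k=0}^{\min(m,n)}\frac{(-1)^k p^{\binom{k}{2}}(p;p)_m(p;p)_n\,r^k}{(p;p)_{m-k}(p;p)_{n-k}(p;p)_k}\,H_{m-k}(x;p)\,H_{n-k}(y;p).$$ In particular $H_{m,n}(x,y;p,r)=H_{n,m}(y,x;p,r)$ for all $m,n\ge 0$.
   Context: For $a,p\in\mathbb{C}$ let $(a;p)_0=1$ and $(a;p)_k=\prod_{l=0}^{k-1}(1-ap^l)$. The continuous $p$-Hermite polynomials $H_n(x;p)\in\mathbb{C}[x]$ are defined by $H_{-1}(x;p)=0$, $H_0(x;p)=1$ and $H_{n+1}(x;p)=2xH_n(x;p)-(1-p^n)H_{n-1}(x;p)$ for $n\ge0$. The bivariate continuous $p$-Hermite polynomials $H_{m,n}(x,y;p,r)\in\mathbb{C}[x,y]$, $m,n\ge 0$, are defined by setting $H_{-1,n}=H_{m,-1}=0$, $H_{0,n}(x,y;p,r)=H_n(y;p)$, and, for all $m,n\ge0$, $$H_{m+1,n}(x,y;p,r)=2xH_{m,n}(x,y;p,r)-(1-p^m)H_{m-1,n}(x,y;p,r)-p^m(1-p^n)\,r\,H_{m,n-1}(x,y;p,r).$$ *)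

theory Defs
  imports Complex_Main
begin

definition qpoch :: "complex \<Rightarrow> complex \<Rightarrow> nat \<Rightarrow> complex" where
  "qpoch a p k = (\<Prod>l<k. 1 - a * p ^ l)"

fun hermH :: "nat \<Rightarrow> complex \<Rightarrow> complex \<Rightarrow> complex" where
  "hermH 0 x p = 1"
| "hermH (Suc 0) x p = 2 * x"
| "hermH (Suc (Suc n)) x p =
     2 * x * hermH (Suc n) x p - (1 - p ^ Suc n) * hermH n x p"

text \<open>The convention H_{m,-1} = 0 is encoded by the if-then-else; H_{-1,n} = 0 is
  used in the case m = 0 of the recursion.\<close>
fun hermH2 :: "nat \<Rightarrow> nat \<Rightarrow> complex \<Rightarrow> complex \<Rightarrow> complex \<Rightarrow> complex \<Rightarrow> complex" where
  "hermH2 0 n x y p r = hermH n y p"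
| "hermH2 (Suc 0) n x y p r =
     2 * x * hermH2 0 n x y p r - (1 - p ^ 0) * 0
     - p ^ 0 * (1 - p ^ n) * r * (if n = 0 then 0 else hermH2 0 (n - 1) x y p r)"
| "hermH2 (Suc (Suc m)) n x y p r =
     2 * x * hermH2 (Suc m) n x y p r - (1 - p ^ Suc m) * hermH2 m n x y p r
     - p ^ Suc m * (1 - p ^ n) * r * (if n = 0 then 0 else hermH2 (Suc m) (n - 1) x y p r)"

end

theory Submission
  imports Defs
begin

text \<open>
  Write (p;p)_m / (p;p)_(m-k) as the product qfalling p m k, which vanishes for k > m, so
  that the right-hand side becomes a sum over all k of terms T(m,n,k). The q-Pascal rule for
  qfalling splits T(m+1,n,k+1) into two parts: by the three-term recurrence of H_(m+1-k), the
  first is 2x T(m,n,k+1) - (1-p^m) T(m-1,n,k+1), and the second is -p^m (1-p^n) r T(m,n-1,k).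
  Hence the sums obey the recurrence defining H_(m,n). The summand is symmetric under
  exchanging (m,x) with (n,y).
\<close>

definition qfalling :: "'a::comm_ring_1 \<Rightarrow> nat \<Rightarrow> nat \<Rightarrow> 'a" where
  "qfalling p m k = (\<Prod>l<k. 1 - p ^ (m - l))"

lemma qfalling_0 [simp]: "qfalling p m 0 = 1"
  by (simp add: qfalling_def)

lemma qfalling_Suc: "qfalling p m (Suc k) = qfalling p m k * (1 - p ^ (m - k))"
  by (simp add: qfalling_def)

lemma qfalling_eq_0: "m < k \<Longrightarrow> qfalling p m k = 0"
  unfolding qfalling_def by (rule prod_zero) (auto intro!: bexI[of _ m])

text \<open>For m = 0 both sides vanish, thanks to the factor 1 - p^0.\<close>
lemma qfalling_Suc_shift: "qfalling p m (Suc k) = (1 - p ^ m) * qfalling p (m - 1) k"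
proof (cases m)
  case (Suc m')
  then show ?thesis
    unfolding qfalling_def by (subst prod.lessThan_Suc_shift) (simp del: prod.lessThan_Suc)
qed (simp add: qfalling_eq_0)

lemma qfalling_pascal:
  "qfalling p (Suc m) (Suc k) =
     qfalling p m (Suc k) + p ^ (m - k) * (1 - p ^ Suc k) * qfalling p m k"
proof (cases "k \<le> m")
  case True
  then have "p ^ (m - k) * p ^ Suc k = p ^ Suc m"
    unfolding power_add[symmetric] by simp
  moreover have "qfalling p (Suc m) (Suc k) = (1 - p ^ Suc m) * qfalling p m k"
    using qfalling_Suc_shift[of p "Suc m"] by simp
  ultimately show ?thesis
    by (simp add: qfalling_Suc algebra_simps)
qed (simp add: qfalling_eq_0)

lemma qpoch_self_Suc: "qpoch p p (Suc k) = qpoch p p k * (1 - p ^ Suc k)"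
  by (simp add: qpoch_def)

lemma qpoch_self_eq_mult_qfalling:
  "k \<le> m \<Longrightarrow> qpoch p p m = qpoch p p (m - k) * qfalling p m k"
proof (induction k)
  case (Suc k)
  then have "m - k = Suc (m - Suc k)"
    by simp
  with Suc show ?case
    by (simp add: qpoch_self_Suc qfalling_Suc)
qed simp

lemma qpoch_self_nonzero:
  assumes "\<And>j. p ^ Suc j \<noteq> 1"
  shows "qpoch p p k \<noteq> 0"
  using assms unfolding qpoch_def by (simp flip: power_Suc)

text \<open>With H_(-1) = 0 encoded as the factor 1 - p^0 = 0.\<close>
lemma hermH_Suc:
  "hermH (Suc m) x p = 2 * x * hermH m x p - (1 - p ^ m) * hermH (m - 1) x p"
  by (cases m) simp_all

lemma qfalling_mult_hermH_Suc:
  "qfalling p m k * hermH (Suc m - k) x p =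
     2 * x * qfalling p m k * hermH (m - k) x p
     - (1 - p ^ m) * qfalling p (m - 1) k * hermH (m - 1 - k) x p"
proof (cases "k \<le> m")
  case True
  then have "Suc m - k = Suc (m - k)" and "m - k - 1 = m - 1 - k"
    by auto
  then have "qfalling p m k * hermH (Suc m - k) x p =
      2 * x * qfalling p m k * hermH (m - k) x p
      - qfalling p m k * (1 - p ^ (m - k)) * hermH (m - 1 - k) x p"
    by (simp add: hermH_Suc[of "m - k"] algebra_simps)
  also have "qfalling p m k * (1 - p ^ (m - k)) = (1 - p ^ m) * qfalling p (m - 1) k"
    by (metis qfalling_Suc qfalling_Suc_shift)
  finally show ?thesis .
qed (simp add: qfalling_eq_0)

definition hermH2_coeff :: "complex \<Rightarrow> complex \<Rightarrow> nat \<Rightarrow> complex" where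
  "hermH2_coeff p r k = (-1) ^ k * p ^ (k choose 2) * r ^ k / qpoch p p k"

lemma hermH2_coeff_0 [simp]: "hermH2_coeff p r 0 = 1"
  by (simp add: hermH2_coeff_def qpoch_def binomial_eq_0)

lemma hermH2_coeff_Suc:
  assumes "p ^ Suc j \<noteq> 1"
  shows "hermH2_coeff p r (Suc j) * (1 - p ^ Suc j) = - r * p ^ j * hermH2_coeff p r j"
proof -
  have "Suc j choose 2 = j + (j choose 2)"
    by (simp add: numeral_2_eq_2)
  then have "hermH2_coeff p r (Suc j) = - r * p ^ j * hermH2_coeff p r j / (1 - p ^ Suc j)"
    unfolding hermH2_coeff_def qpoch_self_Suc
    by (simp add: power_add ac_simps flip: divide_divide_eq_left)
  with assms show ?thesis
    by simp
qed

definition hermH2_term ::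
    "complex \<Rightarrow> complex \<Rightarrow> complex \<Rightarrow> complex \<Rightarrow> nat \<Rightarrow> nat \<Rightarrow> nat \<Rightarrow> complex" where
  "hermH2_term p r x y m n k =
     hermH2_coeff p r k * qfalling p m k * qfalling p n k * hermH (m - k) x p * hermH (n - k) y p"

lemma hermH2_term_eq_0: "min m n < k \<Longrightarrow> hermH2_term p r x y m n k = 0"
  by (cases "m < k") (simp_all add: hermH2_term_def qfalling_eq_0)

lemma hermH2_term_commute: "hermH2_term p r x y m n k = hermH2_term p r y x n m k"
  by (simp add: hermH2_term_def ac_simps)

lemma sum_hermH2_term_lessThan:
  "min m n < N \<Longrightarrow>
     (\<Sum>k<N. hermH2_term p r x y m n k) = (\<Sum>k\<le>min m n. hermH2_term p r x y m n k)"
  using hermH2_term_eq_0 by (intro sum.mono_neutral_right) (auto simp flip: not_less)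

lemma hermH2_term_Suc_0:
  "hermH2_term p r x y (Suc m) n 0 =
     2 * x * hermH2_term p r x y m n 0 - (1 - p ^ m) * hermH2_term p r x y (m - 1) n 0"
  by (simp add: hermH2_term_def hermH_Suc algebra_simps)

lemma hermH2_term_Suc_Suc:
  assumes "p ^ Suc k \<noteq> 1"
  shows "hermH2_term p r x y (Suc m) n (Suc k) =
     2 * x * hermH2_term p r x y m n (Suc k)
     - (1 - p ^ m) * hermH2_term p r x y (m - 1) n (Suc k)
     - p ^ m * (1 - p ^ n) * r * hermH2_term p r x y m (n - 1) k"
proof -
  let ?Y = "hermH2_coeff p r (Suc k) * qfalling p n (Suc k) * hermH (n - Suc k) y p"
  have pascal_part: "?Y * (qfalling p m (Suc k) * hermH (Suc m - Suc k) x p) =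
      2 * x * hermH2_term p r x y m n (Suc k) - (1 - p ^ m) * hermH2_term p r x y (m - 1) n (Suc k)"
    unfolding qfalling_mult_hermH_Suc by (simp add: hermH2_term_def algebra_simps)
  have shift_part:
    "?Y * (p ^ (m - k) * (1 - p ^ Suc k) * qfalling p m k * hermH (Suc m - Suc k) x p) =
      - (p ^ m * (1 - p ^ n) * r * hermH2_term p r x y m (n - 1) k)"
  proof (cases "k \<le> m")
    case True
    have "?Y * (p ^ (m - k) * (1 - p ^ Suc k) * qfalling p m k * hermH (Suc m - Suc k) x p) =
        (hermH2_coeff p r (Suc k) * (1 - p ^ Suc k)) * p ^ (m - k) * qfalling p n (Suc k)
        * qfalling p m k * hermH (m - k) x p * hermH (n - 1 - k) y p"
      by (simp add: ac_simps)
    also have "\<dots> = - r * (p ^ (m - k) * p ^ k) * (1 - p ^ n) * hermH2_coeff p r k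
        * qfalling p m k * qfalling p (n - 1) k * hermH (m - k) x p * hermH (n - 1 - k) y p"
      unfolding hermH2_coeff_Suc[OF assms] qfalling_Suc_shift[of p n] by (simp only: ac_simps)
    also have "p ^ (m - k) * p ^ k = p ^ m"
      using True by (simp flip: power_add)
    finally show ?thesis
      by (simp add: hermH2_term_def ac_simps)
  qed (simp add: hermH2_term_def qfalling_eq_0)
  have "hermH2_term p r x y (Suc m) n (Suc k) =
      ?Y * (qfalling p m (Suc k) * hermH (Suc m - Suc k) x p)
      + ?Y * (p ^ (m - k) * (1 - p ^ Suc k) * qfalling p m k * hermH (Suc m - Suc k) x p)"
    by (simp add: hermH2_term_def qfalling_pascal algebra_simps)
  then show ?thesis
    unfolding pascal_part shift_part by simp
qed

lemma hermH2_Suc: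
  "hermH2 (Suc m) n x y p r =
     2 * x * hermH2 m n x y p r - (1 - p ^ m) * hermH2 (m - 1) n x y p r
     - p ^ m * (1 - p ^ n) * r * hermH2 m (n - 1) x y p r"
  by (cases m; cases n) simp_all

context
  fixes p :: complex
  assumes not_root_of_unity: "\<And>j. p ^ Suc j \<noteq> 1"
begin

lemma sum_hermH2_term_Suc:
  "(\<Sum>k\<le>min (Suc m) n. hermH2_term p r x y (Suc m) n k) =
     2 * x * (\<Sum>k\<le>min m n. hermH2_term p r x y m n k)
     - (1 - p ^ m) * (\<Sum>k\<le>min (m - 1) n. hermH2_term p r x y (m - 1) n k)
     - p ^ m * (1 - p ^ n) * r * (\<Sum>k\<le>min m (n - 1). hermH2_term p r x y m (n - 1) k)"
proof -
  have "(\<Sum>k<Suc (Suc m). hermH2_term p r x y (Suc m) n k) =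
      2 * x * (\<Sum>k<Suc (Suc m). hermH2_term p r x y m n k)
      - (1 - p ^ m) * (\<Sum>k<Suc (Suc m). hermH2_term p r x y (m - 1) n k)
      - p ^ m * (1 - p ^ n) * r * (\<Sum>k<Suc m. hermH2_term p r x y m (n - 1) k)"
    unfolding sum.lessThan_Suc_shift[where n = "Suc m"] hermH2_term_Suc_0
      hermH2_term_Suc_Suc[OF not_root_of_unity]
    by (simp add: sum.distrib sum_subtractf sum_distrib_left algebra_simps)
  then show ?thesis
    by (simp del: sum.lessThan_Suc add: sum_hermH2_term_lessThan)
qed

lemma hermH2_eq_sum_hermH2_term:
  "hermH2 m n x y p r = (\<Sum>k\<le>min m n. hermH2_term p r x y m n k)"
proof (induction m arbitrary: n rule: less_induct)
  case (less m)
  show ?case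
  proof (cases m)
    case 0
    then show ?thesis
      by (simp add: hermH2_term_def)
  next
    case (Suc m')
    then show ?thesis
      by (simp add: hermH2_Suc sum_hermH2_term_Suc less)
  qed
qed

lemma hermH2_term_eq_qpoch_quotient:
  assumes "k \<le> min m n"
  shows "hermH2_term p r x y m n k =
    ((-1) ^ k * p ^ (k choose 2) * qpoch p p m * qpoch p p n * r ^ k)
      / (qpoch p p (m - k) * qpoch p p (n - k) * qpoch p p k)
      * hermH (m - k) x p * hermH (n - k) y p"
proof -
  have "qpoch p p m = qpoch p p (m - k) * qfalling p m k"
    and "qpoch p p n = qpoch p p (n - k) * qfalling p n k"
    using assms by (simp_all add: qpoch_self_eq_mult_qfalling)
  moreover have "qpoch p p (m - k) \<noteq> 0" and "qpoch p p (n - k) \<noteq> 0"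
    using qpoch_self_nonzero not_root_of_unity by blast+
  ultimately show ?thesis
    by (simp add: hermH2_term_def hermH2_coeff_def)
qed

end

theorem mainTheorem1:
  fixes p r :: complex
  assumes not_root_of_unity: "\<forall>j::nat. j > 0 \<longrightarrow> p ^ j \<noteq> 1"
  shows "(\<forall>m n x y. hermH2 m n x y p r =
            (\<Sum>k = 0..min m n.
               ((-1) ^ k * p ^ (k choose 2) * qpoch p p m * qpoch p p n * r ^ k)
               / (qpoch p p (m - k) * qpoch p p (n - k) * qpoch p p k)
               * hermH (m - k) x p * hermH (n - k) y p))
       \<and> (\<forall>m n x y. hermH2 m n x y p r = hermH2 n m y x p r)"
proof -
  have p_Suc_neq_1: "p ^ Suc j \<noteq> 1" for j
    using not_root_of_unity by blast
  have "hermH2 m n x y p r =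
      (\<Sum>k = 0..min m n.
         ((-1) ^ k * p ^ (k choose 2) * qpoch p p m * qpoch p p n * r ^ k)
         / (qpoch p p (m - k) * qpoch p p (n - k) * qpoch p p k)
         * hermH (m - k) x p * hermH (n - k) y p)" for m n x y
    unfolding hermH2_eq_sum_hermH2_term[OF p_Suc_neq_1] atLeast0AtMost
    by (intro sum.cong refl) (simp add: hermH2_term_eq_qpoch_quotient[OF p_Suc_neq_1])
  moreover have "hermH2 m n x y p r = hermH2 n m y x p r" for m n x y
    unfolding hermH2_eq_sum_hermH2_term[OF p_Suc_neq_1]
    by (simp add: min.commute hermH2_term_commute)
  ultimately show ?thesis
    by blast
qed

end
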